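(* Let $B_1,\dots,B_n$ be independent real-valued service times with finite means $\mu_i$, each with a distribution symmetric around its mean, and put $X_i=B_i-\mu_i$. Fix a sequence $\tau\in\mathsf S_n$ and use the mean-based schedule. Then for each $k\in\{1,\dots,n-1\}$ and each $\ell\in\{0,1,\dots,k\}$, $$\mathbb EW_{k+1}\ge\tfrac12\Bigl(\mathbb E\bigl(X_{\tau(1)}+\cdots+X_{\tau(k)}\bigr)^++\mathbb E\bigl(X_{\tau(1)}+\cdots+X_{\tau(\ell)}\bigr)^++\mathbb E\bigl(X_{\tau(\ell+1)}+\cdots+X_{\tau(k)}\bigr)^+\Bigr),$$ with empty sums equal to $0$.
   Context: Under sequence $\tau$ ($\tau(i)$ the patient in slot $i$) and the mean-based schedule (interarrival time after patient $j$ equal to $\mu_j$), the waiting times are $W_1=0$, $W_{i+1}=(W_i+X_{\tau(i)})^+$ with $a^+=\max\{0,a\}$. *)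

theory Defs
  imports "HOL-Probability.Probability" "HOL-Combinatorics.Permutations"
begin

text \<open>Waiting times under sequence tau and the mean-based schedule, 1-indexed:
  W 1 = 0 and W (i+1) = max 0 (W i + X (tau i)).  The value at index 0 is a dummy 0.\<close>
fun wait :: "(nat \<Rightarrow> real) \<Rightarrow> (nat \<Rightarrow> nat) \<Rightarrow> nat \<Rightarrow> real" where
  "wait X \<tau> 0 = 0"
| "wait X \<tau> (Suc i) = (if i = 0 then 0 else max 0 (wait X \<tau> i + X (\<tau> i)))"

end

theory Submission
  imports Defs
begin

(* Put A = X (\<tau> 1) + ... + X (\<tau> l) and C = X (\<tau> (l+1)) + ... + X (\<tau> k).
   Unrolling the Lindley recursion gives W (k+1) \<ge> max 0 (max C (A + C)) = (C + A\<^sup>+)\<^sup>+.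
   As sums over disjoint blocks of independent symmetric variables, (A, C) has the same law
   as (\<plusminus>A, \<plusminus>C) for all four sign choices.  The inequality
   (c + a\<^sup>+)\<^sup>+ \<ge> ((a + c)\<^sup>+ + a\<^sup>+ + c\<^sup>+) / 2 fails pointwise (take a = 1, c = -1), but its
   defect summed over the four sign patterns of (a, c) is nonnegative, so it holds in
   expectation. *)

definition pos_part_gap :: "real \<Rightarrow> real \<Rightarrow> real" where
  "pos_part_gap a c = max 0 (c + max 0 a) - (max 0 (a + c) + max 0 a + max 0 c) / 2"

lemma pos_part_gap_sign_sum_nonneg:
  "0 \<le> pos_part_gap a c + pos_part_gap (-a) c + pos_part_gap a (-c) + pos_part_gap (-a) (-c)"
  unfolding pos_part_gap_def max_def by (auto simp: field_simps)

lemma borel_measurable_pos_part_gap: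
  "(\<lambda>(a, c). pos_part_gap a c) \<in> borel_measurable borel"
  unfolding pos_part_gap_def case_prod_beta
  by (intro borel_measurable_continuous_onI continuous_intros) simp

lemma wait_nonneg: "0 \<le> wait X \<tau> i"
  by (cases i) auto

lemma sum_atLeastAtMost_split:
  fixes f :: "nat \<Rightarrow> 'b::comm_monoid_add"
  assumes "l \<le> k"
  shows "(\<Sum>i=1..k. f i) = (\<Sum>i=1..l. f i) + (\<Sum>i=l+1..k. f i)"
  using sum.ub_add_nat[of 1 l f "k - l"] assms by simp

lemma partial_sum_le_wait:
  assumes "1 \<le> j" "j \<le> Suc i"
  shows "(\<Sum>m=j..i. X (\<tau> m)) \<le> wait X \<tau> (Suc i)"
  using assms
proof (induction i arbitrary: j)
  case 0
  then show ?case by (simp add: wait_nonneg)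
next
  case (Suc i)
  show ?case
  proof (cases "j = Suc (Suc i)")
    case True
    then show ?thesis by (simp add: wait_nonneg)
  next
    case False
    then have "j \<le> Suc i" using Suc.prems by simp
    then have "(\<Sum>m=j..Suc i. X (\<tau> m)) = (\<Sum>m=j..i. X (\<tau> m)) + X (\<tau> (Suc i))"
      by simp
    also have "\<dots> \<le> wait X \<tau> (Suc i) + X (\<tau> (Suc i))"
      using Suc.IH[of j] Suc.prems \<open>j \<le> Suc i\<close> by simp
    finally show ?thesis by simp
  qed
qed

lemma pos_part_split_le_wait:
  assumes "l \<le> k"
  shows "max 0 ((\<Sum>i=l+1..k. X (\<tau> i)) + max 0 (\<Sum>i=1..l. X (\<tau> i))) \<le> wait X \<tau> (Suc k)"
  using wait_nonneg[of X \<tau> "Suc k"] partial_sum_le_wait[of 1 k X \<tau>]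
    partial_sum_le_wait[of "l + 1" k X \<tau>] sum_atLeastAtMost_split[OF assms, of "\<lambda>i. X (\<tau> i)"] assms
  by simp

lemma integrable_wait:
  assumes "\<And>m. 1 \<le> m \<Longrightarrow> m \<le> i \<Longrightarrow> integrable M (X (\<tau> m))"
  shows "integrable M (\<lambda>\<omega>. wait (\<lambda>j. X j \<omega>) \<tau> (Suc i))"
  using assms by (induction i) auto

lemma integrable_pos_part_gap:
  assumes "integrable M f" "integrable M g"
  shows "integrable M (\<lambda>\<omega>. pos_part_gap (f \<omega>) (g \<omega>))"
  unfolding pos_part_gap_def using assms by auto

lemma (in prob_space) indep_vars_distr_restrict_eq:
  assumes X: "indep_vars M' X I" and Y: "indep_vars M' Y I"
    and marginals: "\<And>i. i \<in> I \<Longrightarrow> distr M (M' i) (X i) = distr M (M' i) (Y i)"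
  shows "distr M (\<Pi>\<^sub>M i\<in>I. M' i) (\<lambda>\<omega>. \<lambda>i\<in>I. X i \<omega>) = distr M (\<Pi>\<^sub>M i\<in>I. M' i) (\<lambda>\<omega>. \<lambda>i\<in>I. Y i \<omega>)"
proof (cases "I = {}")
  case False
  have "random_variable (M' i) (X i)" "random_variable (M' i) (Y i)" if "i \<in> I" for i
    using X Y that unfolding indep_vars_def by auto
  then have "distr M (\<Pi>\<^sub>M i\<in>I. M' i) (\<lambda>\<omega>. \<lambda>i\<in>I. Z i \<omega>) = (\<Pi>\<^sub>M i\<in>I. distr M (M' i) (Z i))"
    if "Z = X \<or> Z = Y" for Z
    using that X Y indep_vars_iff_distr_eq_PiM'[OF False] by auto
  then show ?thesis
    using marginals by (simp cong: PiM_cong)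
qed (simp add: restrict_def)

lemma (in prob_space) distr_restrict_sign_flip:
  fixes X :: "'i \<Rightarrow> 'a \<Rightarrow> real"
  assumes indep: "indep_vars (\<lambda>_. borel) X I"
    and symmetric: "\<And>i. i \<in> I \<Longrightarrow> distr M borel (X i) = distr M borel (\<lambda>\<omega>. - X i \<omega>)"
  shows "distr M (\<Pi>\<^sub>M i\<in>I. borel) (\<lambda>\<omega>. \<lambda>i\<in>I. X i \<omega>)
       = distr M (\<Pi>\<^sub>M i\<in>I. borel) (\<lambda>\<omega>. \<lambda>i\<in>I. if i \<in> S then - X i \<omega> else X i \<omega>)"
proof (rule indep_vars_distr_restrict_eq[OF indep])
  show "indep_vars (\<lambda>_. borel) (\<lambda>i \<omega>. if i \<in> S then - X i \<omega> else X i \<omega>) I"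
    using indep_vars_compose2[OF indep, of "\<lambda>i x. if i \<in> S then - x else x"] by simp
next
  fix i assume "i \<in> I"
  then show "distr M borel (X i) = distr M borel (\<lambda>\<omega>. if i \<in> S then - X i \<omega> else X i \<omega>)"
    using symmetric by (cases "i \<in> S") simp_all
qed

lemma (in prob_space) distr_block_sums_sign_flip:
  fixes X :: "'i \<Rightarrow> 'a \<Rightarrow> real"
  assumes indep: "indep_vars (\<lambda>_. borel) X I"
    and symmetric: "\<And>i. i \<in> I \<Longrightarrow> distr M borel (X i) = distr M borel (\<lambda>\<omega>. - X i \<omega>)"
    and blocks: "J \<subseteq> I" "K \<subseteq> I" "J \<inter> K = {}"
    and signs: "s \<in> {-1, 1}" "t \<in> {-1, 1}"
  shows "distr M borel (\<lambda>\<omega>. (\<Sum>j\<in>J. X j \<omega>, \<Sum>j\<in>K. X j \<omega>))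
       = distr M borel (\<lambda>\<omega>. (s * (\<Sum>j\<in>J. X j \<omega>), t * (\<Sum>j\<in>K. X j \<omega>)))"
proof -
  define S where "S = (if s = 1 then {} else J) \<union> (if t = 1 then {} else K)"
  define Y where "Y i \<omega> = (if i \<in> S then - X i \<omega> else X i \<omega>)" for i \<omega>
  define block_sums :: "('i \<Rightarrow> real) \<Rightarrow> real \<times> real"
    where "block_sums v = (\<Sum>j\<in>J. v j, \<Sum>j\<in>K. v j)" for v
  have sums_measurable: "block_sums \<in> (\<Pi>\<^sub>M i\<in>I. borel) \<rightarrow>\<^sub>M borel"
    unfolding block_sums_def using blocks
    by (intro borel_measurable_Pair borel_measurable_sum measurable_component_singleton) auto
  have "X i \<in> borel_measurable M" "Y i \<in> borel_measurable M" if "i \<in> I" for i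
    using indep that unfolding indep_vars_def Y_def by auto
  then have X_measurable: "(\<lambda>\<omega>. \<lambda>i\<in>I. X i \<omega>) \<in> M \<rightarrow>\<^sub>M (\<Pi>\<^sub>M i\<in>I. borel)"
    and Y_measurable: "(\<lambda>\<omega>. \<lambda>i\<in>I. Y i \<omega>) \<in> M \<rightarrow>\<^sub>M (\<Pi>\<^sub>M i\<in>I. borel)"
    by (auto intro: measurable_restrict)
  have "distr M borel (\<lambda>\<omega>. block_sums (\<lambda>i\<in>I. X i \<omega>))
      = distr (distr M (\<Pi>\<^sub>M i\<in>I. borel) (\<lambda>\<omega>. \<lambda>i\<in>I. X i \<omega>)) borel block_sums"
    by (simp add: distr_distr[OF sums_measurable X_measurable] comp_def)
  also have "\<dots> = distr (distr M (\<Pi>\<^sub>M i\<in>I. borel) (\<lambda>\<omega>. \<lambda>i\<in>I. Y i \<omega>)) borel block_sums"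
    using distr_restrict_sign_flip[OF indep symmetric, of S] by (simp add: Y_def)
  also have "\<dots> = distr M borel (\<lambda>\<omega>. block_sums (\<lambda>i\<in>I. Y i \<omega>))"
    by (simp add: distr_distr[OF sums_measurable Y_measurable] comp_def)
  finally have "distr M borel (\<lambda>\<omega>. block_sums (\<lambda>i\<in>I. X i \<omega>))
      = distr M borel (\<lambda>\<omega>. block_sums (\<lambda>i\<in>I. Y i \<omega>))" .
  moreover have "block_sums (\<lambda>i\<in>I. X i \<omega>) = (\<Sum>j\<in>J. X j \<omega>, \<Sum>j\<in>K. X j \<omega>)" for \<omega>
    unfolding block_sums_def using blocks by (auto intro!: sum.cong)
  moreover have "block_sums (\<lambda>i\<in>I. Y i \<omega>) = (s * (\<Sum>j\<in>J. X j \<omega>), t * (\<Sum>j\<in>K. X j \<omega>))" for \<omega>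
    unfolding block_sums_def Y_def S_def using blocks signs
    by (auto simp: sum_negf[symmetric] subset_iff intro!: sum.cong)
  ultimately show ?thesis
    by simp
qed

lemma (in prob_space) sign_symmetric_pos_part_bound:
  fixes A C :: "'a \<Rightarrow> real"
  assumes A: "integrable M A" and C: "integrable M C"
    and sign_symmetric: "\<And>s t. s \<in> {-1, 1} \<Longrightarrow> t \<in> {-1, 1} \<Longrightarrow>
      distr M borel (\<lambda>\<omega>. (A \<omega>, C \<omega>)) = distr M borel (\<lambda>\<omega>. (s * A \<omega>, t * C \<omega>))"
  shows "(expectation (\<lambda>\<omega>. max 0 (A \<omega> + C \<omega>)) + expectation (\<lambda>\<omega>. max 0 (A \<omega>))
          + expectation (\<lambda>\<omega>. max 0 (C \<omega>))) / 2
       \<le> expectation (\<lambda>\<omega>. max 0 (C \<omega> + max 0 (A \<omega>)))"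
proof -
  let ?gap = "\<lambda>s t. expectation (\<lambda>\<omega>. pos_part_gap (s * A \<omega>) (t * C \<omega>))"
  have gap_integrable: "integrable M (\<lambda>\<omega>. pos_part_gap (s * A \<omega>) (t * C \<omega>))" for s t
    using A C by (intro integrable_pos_part_gap) auto
  have flip: "?gap s t = ?gap 1 1" if "s \<in> {-1, 1}" "t \<in> {-1, 1}" for s t
  proof -
    have pair_measurable: "(\<lambda>\<omega>. (s * A \<omega>, t * C \<omega>)) \<in> borel_measurable M" for s t
      using A C by measurable
    show ?thesis
      using integral_distr[OF pair_measurable borel_measurable_pos_part_gap, of s t]
        integral_distr[OF pair_measurable borel_measurable_pos_part_gap, of 1 1]
        sign_symmetric[OF that]
      by simp
  qed
  have "0 \<le> expectation (\<lambda>\<omega>. pos_part_gap (A \<omega>) (C \<omega>) + pos_part_gap (- A \<omega>) (C \<omega>)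
      + pos_part_gap (A \<omega>) (- C \<omega>) + pos_part_gap (- A \<omega>) (- C \<omega>))"
    by (intro Bochner_Integration.integral_nonneg pos_part_gap_sign_sum_nonneg)
  also have "\<dots> = ?gap 1 1 + ?gap (-1) 1 + ?gap 1 (-1) + ?gap (-1) (-1)"
    using gap_integrable[of 1 1] gap_integrable[of "-1" 1] gap_integrable[of 1 "-1"]
      gap_integrable[of "-1" "-1"]
    by simp
  also have "\<dots> = 4 * ?gap 1 1"
    using flip[of "-1" 1] flip[of 1 "-1"] flip[of "-1" "-1"] by simp
  finally have "0 \<le> expectation (\<lambda>\<omega>. pos_part_gap (A \<omega>) (C \<omega>))"
    by simp
  then show ?thesis
    using A C unfolding pos_part_gap_def by simp
qed

lemma (in prob_space) expectation_wait_lower_bound: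
  fixes X :: "nat \<Rightarrow> 'a \<Rightarrow> real"
  assumes indep: "indep_vars (\<lambda>_. borel) X I"
    and symmetric: "\<And>j. j \<in> I \<Longrightarrow> distr M borel (X j) = distr M borel (\<lambda>\<omega>. - X j \<omega>)"
    and integrable: "\<And>j. j \<in> I \<Longrightarrow> integrable M (X j)"
    and in_range: "\<tau> ` {1..k} \<subseteq> I" and inj: "inj_on \<tau> {1..k}"
    and "l \<le> k"
  shows "(expectation (\<lambda>\<omega>. max 0 (\<Sum>i=1..k. X (\<tau> i) \<omega>))
          + expectation (\<lambda>\<omega>. max 0 (\<Sum>i=1..l. X (\<tau> i) \<omega>))
          + expectation (\<lambda>\<omega>. max 0 (\<Sum>i=l+1..k. X (\<tau> i) \<omega>))) / 2
       \<le> expectation (\<lambda>\<omega>. wait (\<lambda>j. X j \<omega>) \<tau> (Suc k))"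
proof -
  define A where "A \<omega> = (\<Sum>i=1..l. X (\<tau> i) \<omega>)" for \<omega>
  define C where "C \<omega> = (\<Sum>i=l+1..k. X (\<tau> i) \<omega>)" for \<omega>
  have block_sum: "(\<Sum>i\<in>R. X (\<tau> i) \<omega>) = (\<Sum>j\<in>\<tau> ` R. X j \<omega>)" if "R \<subseteq> {1..k}" for R \<omega>
    by (simp add: sum.reindex[OF inj_on_subset[OF inj that]])
  have X_\<tau>_integrable: "integrable M (X (\<tau> i))" if "i \<in> {1..k}" for i
    using in_range that by (blast intro: integrable)
  then have A_integrable: "integrable M A" and C_integrable: "integrable M C"
    unfolding A_def C_def using \<open>l \<le> k\<close> by (auto intro!: Bochner_Integration.integrable_sum)
  moreover have "\<tau> ` {1..l} \<inter> \<tau> ` {l+1..k} = {}"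
    using inj_on_image_Int[OF inj, of "{1..l}" "{l+1..k}"] \<open>l \<le> k\<close> by simp
  then have "distr M borel (\<lambda>\<omega>. (A \<omega>, C \<omega>)) = distr M borel (\<lambda>\<omega>. (s * A \<omega>, t * C \<omega>))"
    if "s \<in> {-1, 1}" "t \<in> {-1, 1}" for s t
    unfolding A_def C_def using block_sum in_range \<open>l \<le> k\<close> that
    by (auto intro!: distr_block_sums_sign_flip[OF indep symmetric])
  ultimately have "(expectation (\<lambda>\<omega>. max 0 (A \<omega> + C \<omega>)) + expectation (\<lambda>\<omega>. max 0 (A \<omega>))
          + expectation (\<lambda>\<omega>. max 0 (C \<omega>))) / 2
       \<le> expectation (\<lambda>\<omega>. max 0 (C \<omega> + max 0 (A \<omega>)))"
    by (rule sign_symmetric_pos_part_bound)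
  also have "\<dots> \<le> expectation (\<lambda>\<omega>. wait (\<lambda>j. X j \<omega>) \<tau> (Suc k))"
  proof (rule integral_mono)
    show "integrable M (\<lambda>\<omega>. max 0 (C \<omega> + max 0 (A \<omega>)))"
      using A_integrable C_integrable by auto
    show "integrable M (\<lambda>\<omega>. wait (\<lambda>j. X j \<omega>) \<tau> (Suc k))"
      using X_\<tau>_integrable by (intro integrable_wait) auto
    show "max 0 (C \<omega> + max 0 (A \<omega>)) \<le> wait (\<lambda>j. X j \<omega>) \<tau> (Suc k)" for \<omega>
      unfolding A_def C_def by (rule pos_part_split_le_wait[OF \<open>l \<le> k\<close>])
  qed
  finally show ?thesis
    unfolding A_def C_def sum_atLeastAtMost_split[OF \<open>l \<le> k\<close>] .
qed

theorem lemma3p4: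
  fixes M :: "'a measure" and B :: "nat \<Rightarrow> 'a \<Rightarrow> real" and \<mu> :: "nat \<Rightarrow> real"
    and n k l :: nat and \<tau> :: "nat \<Rightarrow> nat"
  assumes "prob_space M"
    and "prob_space.indep_vars M (\<lambda>_. borel) B {1..n}"
    and "\<And>i. i \<in> {1..n} \<Longrightarrow> integrable M (B i)"
    and "\<And>i. i \<in> {1..n} \<Longrightarrow> \<mu> i = prob_space.expectation M (B i)"
    and "\<And>i. i \<in> {1..n} \<Longrightarrow>
           distr M borel (\<lambda>\<omega>. B i \<omega> - \<mu> i) = distr M borel (\<lambda>\<omega>. \<mu> i - B i \<omega>)"
    and "\<tau> permutes {1..n}"
    and "1 \<le> k" and "k \<le> n - 1" and "l \<le> k"
  shows "prob_space.expectation M (\<lambda>\<omega>. wait (\<lambda>j. B j \<omega> - \<mu> j) \<tau> (k + 1))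
     \<ge> (1/2) * (prob_space.expectation M (\<lambda>\<omega>. max 0 (\<Sum>i=1..k. B (\<tau> i) \<omega> - \<mu> (\<tau> i)))
              + prob_space.expectation M (\<lambda>\<omega>. max 0 (\<Sum>i=1..l. B (\<tau> i) \<omega> - \<mu> (\<tau> i)))
              + prob_space.expectation M (\<lambda>\<omega>. max 0 (\<Sum>i=l+1..k. B (\<tau> i) \<omega> - \<mu> (\<tau> i))))"
proof -
  interpret prob_space M by fact
  define X where "X = (\<lambda>j \<omega>. B j \<omega> - \<mu> j)"
  have indep: "indep_vars (\<lambda>_. borel) X {1..n}"
    using indep_vars_compose2[OF assms(2), of "\<lambda>j b. b - \<mu> j" "\<lambda>_. borel"]
    by (simp add: X_def)
  have symmetric: "distr M borel (X j) = distr M borel (\<lambda>\<omega>. - X j \<omega>)" if "j \<in> {1..n}" for j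
    using assms(5)[OF that] by (simp add: X_def)
  have integrable: "integrable M (X j)" if "j \<in> {1..n}" for j
    unfolding X_def using assms(3)[OF that] by simp
  have "{1..k} \<subseteq> {1..n}"
    using assms(8) by auto
  then have in_range: "\<tau> ` {1..k} \<subseteq> {1..n}"
    using permutes_image[OF assms(6)] by (metis image_mono)
  have "(expectation (\<lambda>\<omega>. max 0 (\<Sum>i=1..k. X (\<tau> i) \<omega>))
          + expectation (\<lambda>\<omega>. max 0 (\<Sum>i=1..l. X (\<tau> i) \<omega>))
          + expectation (\<lambda>\<omega>. max 0 (\<Sum>i=l+1..k. X (\<tau> i) \<omega>))) / 2
       \<le> expectation (\<lambda>\<omega>. wait (\<lambda>j. X j \<omega>) \<tau> (Suc k))"
    using expectation_wait_lower_bound[OF indep symmetric integrable in_range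
        permutes_inj_on[OF assms(6)] assms(9)] .
  then show ?thesis
    by (simp add: X_def)
qed

end
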